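(* Let $\mathbf L\in\mathbb R_+^{n\times k}$ and $\mathbf p\in\operatorname{relint}(\Delta_n)$. Then for any $t_1,t_2\in\operatorname{argmin}_{t'\in[k]}\mathbf p^\top\boldsymbol\ell_{t'}$ (i.e. $\mathbf p\in\mathcal Q^{\mathbf L}_{t_1}\cap\mathcal Q^{\mathbf L}_{t_2}$), we have $\mu_{\mathcal Q^{\mathbf L}_{t_1}}(\mathbf p)=\mu_{\mathcal Q^{\mathbf L}_{t_2}}(\mathbf p)$.
   Context: Notation: $[m]=\{1,\dots,m\}$; $\Delta_n=\{\mathbf p\in\mathbb R_+^n:\sum_i p_i=1\}$, whose relative interior is the set of $\mathbf p\in\Delta_n$ with all entries strictly positive. A loss matrix $\mathbf L\in\mathbb R_+^{n\times k}$ has columns $\boldsymbol\ell_t$. Trigger probability set: $\mathcal Q^{\mathbf L}_t=\{\mathbf p\in\Delta_n: t\in\operatorname{argmin}_{t'\in[k]}\mathbf p^\top\boldsymbol\ell_{t'}\}$. For a convex set $\mathcal Q\subseteq\mathbb R^n$ and $\mathbf p\in\mathcal Q$, $\mathcal F_{\mathcal Q}(\mathbf p)=\{\mathbf v:\exists\epsilon_0>0,\ \mathbf p+\epsilon\mathbf v\in\mathcal Q\ \forall\epsilon\in(0,\epsilon_0)\}$ and $\mu_{\mathcal Q}(\mathbf p)=\dim(\mathcal F_{\mathcal Q}(\mathbf p)\cap(-\mathcal F_{\mathcal Q}(\mathbf p)))$. *)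

theory Defs
  imports "HOL-Analysis.Analysis"
begin

text \<open>Vectors in R^n are real^'n; a loss matrix L in R_+^{n x k} is real^'k^'n
  (row index 'n, column index 'k); its t-th column is column t L.\<close>

definition prob_simplex :: "(real^'n) set" where
  "prob_simplex = {p. (\<forall>i. 0 \<le> p $ i) \<and> (\<Sum>i\<in>UNIV. p $ i) = 1}"

definition relint_simplex :: "(real^'n) set" where
  "relint_simplex = {p. (\<forall>i. 0 < p $ i) \<and> (\<Sum>i\<in>UNIV. p $ i) = 1}"

definition nonneg_matrix :: "real^'k^'n \<Rightarrow> bool" where
  "nonneg_matrix L \<longleftrightarrow> (\<forall>i j. 0 \<le> L $ i $ j)"

definition is_argmin_loss :: "real^'k^'n \<Rightarrow> real^'n \<Rightarrow> 'k \<Rightarrow> bool" where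
  "is_argmin_loss L p t \<longleftrightarrow> (\<forall>t'. p \<bullet> column t L \<le> p \<bullet> column t' L)"

definition trigger_set :: "real^'k^'n \<Rightarrow> 'k \<Rightarrow> (real^'n) set" where
  "trigger_set L t = {p \<in> prob_simplex. is_argmin_loss L p t}"

definition feasible_dirs :: "(real^'n) set \<Rightarrow> real^'n \<Rightarrow> (real^'n) set" where
  "feasible_dirs Q p = {v. \<exists>e0>0. \<forall>e. 0 < e \<and> e < e0 \<longrightarrow> p + e *\<^sub>R v \<in> Q}"

definition mu_dim :: "(real^'n) set \<Rightarrow> real^'n \<Rightarrow> nat" where
  "mu_dim Q p = dim (feasible_dirs Q p \<inter> uminus ` feasible_dirs Q p)"

end

theory Submission
  imports Defs
begin

(* Fix p in the relative interior of the simplex and an action t that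
   is optimal at p.  Near p the only constraints of the trigger set Q_t that can become
   active are the ties: the simplex constraint sum p = 1 (the positivity constraints are
   slack) and the inequalities p.l_t <= p.l_t' for actions t' tied with t at p (for the
   other t' the inequality is strict and stays so).  Hence the cone of feasible directions
   of Q_t at p is exactly
       { v. sum v = 0  and  v.l_t <= v.l_t' for every t' tied with t },
   and its lineality space F \<inter> -F is the subspace where all these inequalities are equalities.
   That subspace only depends on the set of actions tied at p, which is the same for any two
   optimal actions t1, t2; so the two lineality spaces coincide and have the same dimension. *)

text \<open>A direction is feasible iff the ray \<open>p + e v\<close> stays in \<open>Q\<close> for all small \<open>e > 0\<close>;
  phrasing this as an eventually-statement lets us combine finitely many constraints.\<close>

lemma feasible_dirs_iff_eventually:
  "v \<in> feasible_dirs Q p \<longleftrightarrow> (\<forall>\<^sub>F e in at_right 0. p + e *\<^sub>R v \<in> Q)"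
  unfolding feasible_dirs_def eventually_at_right_field by auto

lemma eventually_affine_pos:
  fixes a b :: real
  assumes "0 < a"
  shows "\<forall>\<^sub>F e in at_right 0. 0 < a + e * b"
proof -
  have "((\<lambda>e. a + e * b) \<longlongrightarrow> a + 0 * b) (at_right 0)"
    by (intro tendsto_intros)
  from order_tendstoD(1)[OF this] show ?thesis
    using assms by simp
qed

lemma inner_ray: "(p + e *\<^sub>R v) \<bullet> c = p \<bullet> c + e * (v \<bullet> (c::real^'n))"
  by (simp add: inner_add_left)

lemma sum_ray: "(\<Sum>i\<in>UNIV. (p + e *\<^sub>R v) $ i) = (\<Sum>i\<in>UNIV. p $ i) + e * (\<Sum>i\<in>UNIV. (v::real^'n) $ i)"
  by (simp add: sum.distrib sum_distrib_left)

definition tied :: "real^'k^'n \<Rightarrow> real^'n \<Rightarrow> 'k \<Rightarrow> 'k \<Rightarrow> bool" where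
  "tied L p t t' \<longleftrightarrow> p \<bullet> column t' L = p \<bullet> column t L"

lemma feasible_dir_necessary:
  assumes p: "p \<in> relint_simplex"
    and v: "v \<in> feasible_dirs (trigger_set L t) p"
  shows "(\<Sum>i\<in>UNIV. v $ i) = 0 \<and> (\<forall>t'. tied L p t t' \<longrightarrow> v \<bullet> column t L \<le> v \<bullet> column t' L)"
proof -
  have "\<forall>\<^sub>F e in at_right 0. 0 < e \<and> p + e *\<^sub>R v \<in> trigger_set L t"
    using v eventually_at_right_less[of "0::real"] by (simp add: feasible_dirs_iff_eventually eventually_conj)
  then obtain e where e: "0 < e" and m: "p + e *\<^sub>R v \<in> trigger_set L t"
    using eventually_happens'[OF trivial_limit_at_right_real] by blast
  have "(\<Sum>i\<in>UNIV. p $ i) = 1" "(\<Sum>i\<in>UNIV. (p + e *\<^sub>R v) $ i) = 1"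
    using p m by (auto simp: relint_simplex_def trigger_set_def prob_simplex_def)
  hence "e * (\<Sum>i\<in>UNIV. v $ i) = 0"
    using sum_ray[of p e v] by linarith
  hence sum0: "(\<Sum>i\<in>UNIV. v $ i) = 0"
    using e by simp
  have "v \<bullet> column t L \<le> v \<bullet> column t' L" if "tied L p t t'" for t'
  proof -
    have "(p + e *\<^sub>R v) \<bullet> column t L \<le> (p + e *\<^sub>R v) \<bullet> column t' L"
      using m by (simp add: trigger_set_def is_argmin_loss_def)
    hence "e * (v \<bullet> column t L) \<le> e * (v \<bullet> column t' L)"
      using that by (simp add: inner_ray tied_def)
    thus ?thesis
      using e by simp
  qed
  with sum0 show ?thesis
    by blast
qed

text \<open>Sufficiency: at a relative-interior point only the tie constraints matter, since the
  positivity constraints and the strict inequalities against untied actions persist.\<close>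

lemma feasible_dir_sufficient:
  assumes p: "p \<in> relint_simplex" and t: "is_argmin_loss L p t"
    and sum0: "(\<Sum>i\<in>UNIV. v $ i) = 0"
    and ties: "\<And>t'. tied L p t t' \<Longrightarrow> v \<bullet> column t L \<le> v \<bullet> column t' L"
  shows "v \<in> feasible_dirs (trigger_set L t) p"
proof -
  have pos: "\<And>i. 0 < p $ i" and mass: "(\<Sum>i\<in>UNIV. p $ i) = 1"
    using p by (auto simp: relint_simplex_def)
  have optimal: "\<forall>\<^sub>F e in at_right 0. (p + e *\<^sub>R v) \<bullet> column t L \<le> (p + e *\<^sub>R v) \<bullet> column t' L"
    for t'
  proof (cases "tied L p t t'")
    case True
    from eventually_at_right_less[of "0::real"] show ?thesis
      by eventually_elim (use True ties in \<open>simp add: inner_ray tied_def\<close>)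
  next
    case False
    have "p \<bullet> column t L \<le> p \<bullet> column t' L"
      using t by (simp add: is_argmin_loss_def)
    hence "0 < p \<bullet> column t' L - p \<bullet> column t L"
      using False by (simp add: tied_def)
    from eventually_affine_pos[OF this, of "v \<bullet> column t' L - v \<bullet> column t L"]
    show ?thesis
      by eventually_elim (simp add: inner_ray algebra_simps)
  qed
  have mass_ray: "(\<Sum>i\<in>UNIV. (p + e *\<^sub>R v) $ i) = 1" for e
    using sum_ray[of p e v] by (simp add: mass sum0)
  have "\<forall>\<^sub>F e in at_right 0. \<forall>i. 0 < (p + e *\<^sub>R v) $ i"
    using eventually_affine_pos[OF pos] by (simp add: eventually_all_finite)
  moreover have "\<forall>\<^sub>F e in at_right 0. \<forall>t'. (p + e *\<^sub>R v) \<bullet> column t L \<le> (p + e *\<^sub>R v) \<bullet> column t' L"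
    using optimal by (simp add: eventually_all_finite)
  ultimately have "\<forall>\<^sub>F e in at_right 0. p + e *\<^sub>R v \<in> trigger_set L t"
    by eventually_elim
      (use mass_ray in \<open>auto simp: trigger_set_def prob_simplex_def is_argmin_loss_def
        intro: less_imp_le\<close>)
  thus ?thesis
    by (simp add: feasible_dirs_iff_eventually)
qed

theorem feasible_dirs_trigger_set:
  assumes "p \<in> relint_simplex" and "is_argmin_loss L p t"
  shows "feasible_dirs (trigger_set L t) p =
    {v. (\<Sum>i\<in>UNIV. v $ i) = 0 \<and> (\<forall>t'. tied L p t t' \<longrightarrow> v \<bullet> column t L \<le> v \<bullet> column t' L)}"
  using feasible_dir_necessary[OF assms(1)] feasible_dir_sufficient[OF assms] by blast

definition tie_subspace :: "real^'k^'n \<Rightarrow> real^'n \<Rightarrow> 'k \<Rightarrow> (real^'n) set" where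
  "tie_subspace L p t =
    {v. (\<Sum>i\<in>UNIV. v $ i) = 0 \<and> (\<forall>t'. tied L p t t' \<longrightarrow> v \<bullet> column t' L = v \<bullet> column t L)}"

lemma lineality_trigger_set:
  assumes "p \<in> relint_simplex" and "is_argmin_loss L p t"
  shows "feasible_dirs (trigger_set L t) p \<inter> uminus ` feasible_dirs (trigger_set L t) p =
    tie_subspace L p t"
proof -
  let ?F = "feasible_dirs (trigger_set L t) p"
  have pos: "v \<in> ?F \<longleftrightarrow>
      (\<Sum>i\<in>UNIV. v $ i) = 0 \<and> (\<forall>t'. tied L p t t' \<longrightarrow> v \<bullet> column t L \<le> v \<bullet> column t' L)" for v
    by (simp add: feasible_dirs_trigger_set[OF assms])
  have neg: "v \<in> uminus ` ?F \<longleftrightarrow>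
      (\<Sum>i\<in>UNIV. v $ i) = 0 \<and> (\<forall>t'. tied L p t t' \<longrightarrow> v \<bullet> column t' L \<le> v \<bullet> column t L)" for v
  proof -
    have "v \<in> uminus ` ?F \<longleftrightarrow> - v \<in> ?F"
      by (metis image_iff minus_minus)
    thus ?thesis
      by (simp add: feasible_dirs_trigger_set[OF assms] sum_negf)
  qed
  show ?thesis
  proof (intro set_eqI)
    fix v
    show "v \<in> ?F \<inter> uminus ` ?F \<longleftrightarrow> v \<in> tie_subspace L p t"
      unfolding Int_iff pos neg tie_subspace_def mem_Collect_eq order_eq_iff[where 'a = real] by blast
  qed
qed

text \<open>Two optimal actions are tied with exactly the same actions, so their tie subspaces agree.\<close>

lemma tie_subspace_cong:
  assumes "p \<bullet> column t1 L = p \<bullet> column t2 L"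
  shows "tie_subspace L p t1 = tie_subspace L p t2"
proof -
  have "(\<forall>t'. tied L p t1 t' \<longrightarrow> v \<bullet> column t' L = v \<bullet> column t1 L) \<longleftrightarrow>
        (\<forall>t'. tied L p t2 t' \<longrightarrow> v \<bullet> column t' L = v \<bullet> column t2 L)" for v
    using assms unfolding tied_def by metis
  thus ?thesis
    unfolding tie_subspace_def by simp
qed

theorem mainTheorem12:
  fixes L :: "real^'k^'n" and p :: "real^'n" and t1 t2 :: 'k
  assumes "nonneg_matrix L"
    and "p \<in> relint_simplex"
    and "is_argmin_loss L p t1"
    and "is_argmin_loss L p t2"
  shows "mu_dim (trigger_set L t1) p = mu_dim (trigger_set L t2) p"
proof -
  have "p \<bullet> column t1 L = p \<bullet> column t2 L"
    using assms(3,4) unfolding is_argmin_loss_def by (meson order_antisym)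
  hence "tie_subspace L p t1 = tie_subspace L p t2"
    by (rule tie_subspace_cong)
  thus ?thesis
    unfolding mu_dim_def lineality_trigger_set[OF assms(2,3)] lineality_trigger_set[OF assms(2,4)]
    by simp
qed

end
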